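(* Let $\rho$ be a two-qubit state on $\mathbb{C}^2\otimes\mathbb{C}^2$ whose correlation matrix $T$ is diagonal. If $d_{\max}(\rho)>1/\sqrt2$, then $M(\rho)>1$. The converse does not hold: there exist two-qubit states $\rho$ with diagonal correlation matrix such that $M(\rho)>1$ but $d_{\max}(\rho)\leq 1/\sqrt2$.
   Context: Let $\sigma_0,\sigma_1,\sigma_2$ be the Pauli matrices $X,Y,Z$. Every two-qubit state can be written as $\rho=\frac14\big(I\otimes I+\sum_i r^A_i\sigma_i\otimes I+\sum_j r^B_j I\otimes\sigma_j+\sum_{i,j}T_{ij}\sigma_i\otimes\sigma_j\big)$, with $r^A_i=\mathrm{Tr}(\sigma_i\rho_A)$, $r^B_j=\mathrm{Tr}(\sigma_j\rho_B)$ and real correlation matrix $T_{ij}=\mathrm{Tr}((\sigma_i\otimes\sigma_j)\rho)$. Define $M(\rho)=\tau_1+\tau_2$, the sum of the two largest eigenvalues of $T^TT$. A unitary $U^B$ on $\mathbb{C}^2$ is called cyclic for $\rho$ if $[\rho_B,U^B]=0$, where $\rho_B=\mathrm{Tr}_A\rho$. Set $\rho_f=(I\otimes U^B)\rho(I\otimes U^{B\dagger})$, define $d(\rho,U^B)=\frac{1}{\sqrt2}\|\rho-\rho_f\|_F$ (Frobenius norm), and $d_{\max}(\rho)=\max\{d(\rho,U^B): U^B\text{ unitary},\ [\rho_B,U^B]=0\}$. *)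

theory Defs
  imports "Jordan_Normal_Form.Char_Poly"
begin

(* Pauli matrices sigma_0 = X, sigma_1 = Y, sigma_2 = Z, basis |0>,|1> *)
definition pauli :: "nat \<Rightarrow> complex mat" where
  "pauli k = (if k = 0 then mat_of_rows_list 2 [[0, 1], [1, 0]]
              else if k = 1 then mat_of_rows_list 2 [[0, -\<i>], [\<i>, 0]]
              else mat_of_rows_list 2 [[1, 0], [0, -1]])"

definition cadj :: "complex mat \<Rightarrow> complex mat" where
  "cadj A = mat (dim_col A) (dim_row A) (\<lambda>(i, j). cnj (A $$ (j, i)))"

definition mtrace :: "complex mat \<Rightarrow> complex" where
  "mtrace A = (\<Sum>i<dim_row A. A $$ (i, i))"

(* Kronecker product of 2x2 matrices; basis |a> \<otimes> |b> is index 2*a+b *)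
definition kron2 :: "complex mat \<Rightarrow> complex mat \<Rightarrow> complex mat" where
  "kron2 A B = mat 4 4 (\<lambda>(i, j). A $$ (i div 2, j div 2) * B $$ (i mod 2, j mod 2))"

definition two_qubit_state :: "complex mat \<Rightarrow> bool" where
  "two_qubit_state \<rho> \<longleftrightarrow> \<rho> \<in> carrier_mat 4 4 \<and> cadj \<rho> = \<rho> \<and>
     (\<forall>v \<in> carrier_vec 4. 0 \<le> Re (conjugate v \<bullet> (\<rho> *\<^sub>v v))) \<and> mtrace \<rho> = 1"

definition ptrace_A :: "complex mat \<Rightarrow> complex mat" where
  "ptrace_A \<rho> = mat 2 2 (\<lambda>(b, b'). \<Sum>a<2. \<rho> $$ (2 * a + b, 2 * a + b'))"

definition corr_mat :: "complex mat \<Rightarrow> real mat" where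
  "corr_mat \<rho> = mat 3 3 (\<lambda>(i, j). Re (mtrace (kron2 (pauli i) (pauli j) * \<rho>)))"

definition is_diagonal :: "real mat \<Rightarrow> bool" where
  "is_diagonal A \<longleftrightarrow> (\<forall>i < dim_row A. \<forall>j < dim_col A. i \<noteq> j \<longrightarrow> A $$ (i, j) = 0)"

definition eigs_desc :: "real mat \<Rightarrow> real list" where
  "eigs_desc A = rev (sorted_list_of_multiset (proots (char_poly A)))"

definition M_val :: "complex mat \<Rightarrow> real" where
  "M_val \<rho> = (let T = corr_mat \<rho>; ev = eigs_desc (transpose_mat T * T) in ev ! 0 + ev ! 1)"

definition unitary2 :: "complex mat \<Rightarrow> bool" where
  "unitary2 U \<longleftrightarrow> U \<in> carrier_mat 2 2 \<and> U * cadj U = 1\<^sub>m 2"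

definition frob_norm :: "complex mat \<Rightarrow> real" where
  "frob_norm A = sqrt (\<Sum>i<dim_row A. \<Sum>j<dim_col A. (cmod (A $$ (i, j)))\<^sup>2)"

definition rho_f :: "complex mat \<Rightarrow> complex mat \<Rightarrow> complex mat" where
  "rho_f \<rho> U = kron2 (1\<^sub>m 2) U * \<rho> * kron2 (1\<^sub>m 2) (cadj U)"

definition dist_cyc :: "complex mat \<Rightarrow> complex mat \<Rightarrow> real" where
  "dist_cyc \<rho> U = frob_norm (\<rho> - rho_f \<rho> U) / sqrt 2"

definition d_max :: "complex mat \<Rightarrow> real" where
  "d_max \<rho> = Sup {dist_cyc \<rho> U | U. unitary2 U \<and> ptrace_A \<rho> * U = U * ptrace_A \<rho>}"

end

theory Submission
  imports Defs
begin

text \<open>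
  Write \<open>\<rho> = (I + r\<^sup>A\<cdot>\<sigma> \<otimes> I + I \<otimes> r\<^sup>B\<cdot>\<sigma> + \<Sum>\<^sub>i T\<^sub>i\<^sub>i \<sigma>\<^sub>i \<otimes> \<sigma>\<^sub>i) / 4\<close>. Conjugation by
  \<open>I \<otimes> U\<close> leaves the first two local terms alone and, when \<open>U\<close> commutes with \<open>\<rho>\<^sub>B\<close>, also the
  third, so \<open>\<rho> - \<rho>\<^sub>f\<close> only sees the correlation part. In the computational basis this is a statement
  about the \<open>2 \<times> 2\<close> blocks of \<open>\<rho>\<close>: each block is a combination of \<open>\<rho>\<^sub>B\<close> and \<open>I\<close> plus the
  corresponding block of \<open>\<Sum>\<^sub>i T\<^sub>i\<^sub>i \<sigma>\<^sub>i \<otimes> \<sigma>\<^sub>i / 4\<close>. Computing the latter gives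
  \<open>\<parallel>\<rho> - \<rho>\<^sub>f\<parallel>\<^sup>2 = (\<Sum>\<^sub>i T\<^sub>i\<^sub>i\<^sup>2 w\<^sub>i) / 2\<close> with weights \<open>w\<^sub>i \<in> [0, 2]\<close> of total at most \<open>4\<close>
  (they are \<open>1 - O\<^sub>i\<^sub>i\<close> for the rotation \<open>O\<close> induced by \<open>U\<close>), hence \<open>\<parallel>\<rho> - \<rho>\<^sub>f\<parallel>\<^sup>2 \<le> \<tau>\<^sub>1 + \<tau>\<^sub>2\<close>
  and \<open>d\<^sup>2 \<le> M(\<rho>) / 2\<close>.

  For the converse take \<open>T = diag(1/2, -1/2, 1)\<close> and \<open>\<rho>\<^sub>B = diag(3/4, 1/4)\<close>: then \<open>M = 5/4\<close>,
  but \<open>\<rho>\<^sub>B\<close> has distinct eigenvalues, so every cyclic \<open>U\<close> is diagonal, only \<open>w\<^sub>0 = w\<^sub>1 \<le> 2\<close>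
  survive, and \<open>d \<le> 1/2\<close>.
\<close>

section \<open>The two largest eigenvalues of a diagonal correlation matrix\<close>

lemma sum_two_largest_sorted3:
  fixes u v w :: real
  assumes "sorted L" "mset L = {#u, v, w#}"
  shows "rev L ! 0 + rev L ! 1 = u + v + w - min u (min v w)"
proof -
  have "length L = 3" using arg_cong[OF assms(2), of size] by simp
  then obtain l0 l1 l2 where L: "L = [l0, l1, l2]"
    by (cases L; cases "tl L"; cases "tl (tl L)") (auto simp: numeral_3_eq_3)
  have sorted: "l0 \<le> l1" "l1 \<le> l2" using assms(1) L by auto
  have m: "{#l0, l1, l2#} = {#u, v, w#}" using assms(2) L by simp
  then have "{l0, l1, l2} = {u, v, w}" by (metis set_mset_add_mset_insert set_mset_empty)
  then have "u \<in> {l0, l1, l2}" "v \<in> {l0, l1, l2}" "w \<in> {l0, l1, l2}" "l0 \<in> {u, v, w}" by auto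
  then have "l0 = min u (min v w)" using sorted by auto
  moreover have "l0 + l1 + l2 = u + v + w"
    using arg_cong[OF m, of sum_mset] by (simp add: algebra_simps)
  ultimately show ?thesis using L by simp
qed

lemma proots_three_linear_factors: "proots (\<Prod>a\<leftarrow>[u, v, w :: real]. [:- a, 1:]) = {#u, v, w#}"
proof -
  have "(\<Prod>a\<leftarrow>[u, v, w :: real]. [:- a, 1:]) = [:- u, 1:] * ([:- v, 1:] * [:- w, 1:])" by simp
  also have "proots \<dots> = {#u, v, w#}"
    by (subst proots_mult, simp, simp add: mult_eq_0_iff, subst proots_mult, simp_all)
  finally show ?thesis .
qed

lemma M_val_diagonal:
  assumes "is_diagonal (corr_mat \<rho>)"
  shows "M_val \<rho> = (corr_mat \<rho> $$ (0, 0))\<^sup>2 + (corr_mat \<rho> $$ (1, 1))\<^sup>2 + (corr_mat \<rho> $$ (2, 2))\<^sup>2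
     - min ((corr_mat \<rho> $$ (0, 0))\<^sup>2) (min ((corr_mat \<rho> $$ (1, 1))\<^sup>2) ((corr_mat \<rho> $$ (2, 2))\<^sup>2))"
proof -
  define T where "T = corr_mat \<rho>"
  have T: "T \<in> carrier_mat 3 3" unfolding T_def corr_mat_def by simp
  have off_diag: "T $$ (i, j) = 0" if "i < 3" "j < 3" "i \<noteq> j" for i j
    using assms T that unfolding T_def [symmetric] is_diagonal_def by auto
  define A where "A = transpose_mat T * T"
  have A: "A \<in> carrier_mat 3 3" unfolding A_def using T by simp
  have A_index: "A $$ (i, j) = (if i = j then (T $$ (i, i))\<^sup>2 else 0)" if "i < 3" "j < 3" for i j
  proof -
    have "A $$ (i, j) = (\<Sum>k<3. T $$ (k, i) * T $$ (k, j))"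
      unfolding A_def using T that by (simp add: scalar_prod_def atLeast0LessThan mult.commute)
    moreover have "i = 0 \<or> i = 1 \<or> i = 2" "j = 0 \<or> j = 1 \<or> j = 2" using that by auto
    ultimately show ?thesis using off_diag by (auto simp: eval_nat_numeral power2_eq_square)
  qed
  have "upper_triangular A" unfolding upper_triangular_def using A A_index by auto
  then have "char_poly A = (\<Prod>a\<leftarrow>diag_mat A. [:- a, 1:])"
    by (rule char_poly_upper_triangular[OF A])
  moreover have "diag_mat A = [(T $$ (0, 0))\<^sup>2, (T $$ (1, 1))\<^sup>2, (T $$ (2, 2))\<^sup>2]"
    unfolding diag_mat_def using A A_index by (simp add: upt_rec numeral_2_eq_2)
  ultimately have "proots (char_poly A) = {#(T $$ (0, 0))\<^sup>2, (T $$ (1, 1))\<^sup>2, (T $$ (2, 2))\<^sup>2#}"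
    by (simp only: proots_three_linear_factors)
  then show ?thesis
    unfolding M_val_def Let_def eigs_desc_def T_def [symmetric] A_def [symmetric]
    by (intro sum_two_largest_sorted3) auto
qed

lemma weighted_sum_le_sum_minus_min:
  fixes \<tau>0 \<tau>1 \<tau>2 w0 w1 w2 :: real
  assumes "0 \<le> \<tau>0" "0 \<le> \<tau>1" "0 \<le> \<tau>2"
    and "0 \<le> w0" "w0 \<le> 2" "0 \<le> w1" "w1 \<le> 2" "0 \<le> w2" "w2 \<le> 2" "w0 + w1 + w2 \<le> 4"
  shows "\<tau>0 * w0 + \<tau>1 * w1 + \<tau>2 * w2 \<le> 2 * (\<tau>0 + \<tau>1 + \<tau>2 - min \<tau>0 (min \<tau>1 \<tau>2))"
proof -
  define m where "m = min \<tau>0 (min \<tau>1 \<tau>2)"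
  have "(\<tau>0 - m) * (w0 - 2) \<le> 0" "(\<tau>1 - m) * (w1 - 2) \<le> 0" "(\<tau>2 - m) * (w2 - 2) \<le> 0"
    "m * (w0 + w1 + w2 - 4) \<le> 0"
    using assms unfolding m_def by (auto intro: mult_nonneg_nonpos mult_nonpos_nonneg)
  then have "(\<tau>0 - m) * (w0 - 2) + (\<tau>1 - m) * (w1 - 2) + (\<tau>2 - m) * (w2 - 2) + m * (w0 + w1 + w2 - 4) \<le> 0"
    by linarith
  then show ?thesis unfolding m_def [symmetric] by (simp add: algebra_simps)
qed

lemma sum_lessThan_2: "(\<Sum>k<(2::nat). f k) = f 0 + f 1"
  by (simp add: eval_nat_numeral)

lemma sum_lessThan_4: "(\<Sum>k<(4::nat). f k) = f 0 + f 1 + f 2 + f 3"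
  by (simp add: eval_nat_numeral)

lemma less_2_cases: "n < 2 \<longleftrightarrow> n = 0 \<or> n = (1::nat)"
  by auto

lemma cadj_carrier [simp]: "U \<in> carrier_mat n m \<Longrightarrow> cadj U \<in> carrier_mat m n"
  by (simp add: cadj_def)

lemma cadj_dim [simp]: "dim_row (cadj U) = dim_col U" "dim_col (cadj U) = dim_row U"
  by (simp_all add: cadj_def)

lemma cadj_index [simp]: "i < dim_col U \<Longrightarrow> j < dim_row U \<Longrightarrow> cadj U $$ (i, j) = cnj (U $$ (j, i))"
  by (simp add: cadj_def)

lemma kron2_dim [simp]: "dim_row (kron2 A B) = 4" "dim_col (kron2 A B) = 4"
  by (simp_all add: kron2_def)

lemma kron2_index: "i < 4 \<Longrightarrow> j < 4 \<Longrightarrow> kron2 A B $$ (i, j) = A $$ (i div 2, j div 2) * B $$ (i mod 2, j mod 2)"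
  by (simp add: kron2_def)

lemma pauli_dim [simp]: "dim_row (pauli k) = 2" "dim_col (pauli k) = 2"
  unfolding pauli_def mat_of_rows_list_def by simp_all

lemma pauli_carrier: "pauli k \<in> carrier_mat 2 2"
  by (simp add: carrier_matI)

lemma pauli_z_index:
  "pauli 2 $$ (0, 0) = 1" "pauli 2 $$ (0, 1) = 0" "pauli 2 $$ (1, 0) = 0" "pauli 2 $$ (1, 1) = -1"
  by (simp_all add: pauli_def mat_of_rows_list_def)

lemma ptrace_A_dim [simp]: "dim_row (ptrace_A \<rho>) = 2" "dim_col (ptrace_A \<rho>) = 2"
  by (simp_all add: ptrace_A_def)

lemma ptrace_A_carrier: "ptrace_A \<rho> \<in> carrier_mat 2 2"
  by (simp add: carrier_matI)

lemma ptrace_A_index: "i < 2 \<Longrightarrow> j < 2 \<Longrightarrow> ptrace_A \<rho> $$ (i, j) = \<rho> $$ (i, j) + \<rho> $$ (2 + i, 2 + j)"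
  by (simp add: ptrace_A_def sum_lessThan_2)

definition antidiag2 :: "real \<Rightarrow> real \<Rightarrow> complex mat" where
  "antidiag2 x y = mat_of_rows_list 2 [[0, of_real x], [of_real y, 0]]"

lemma antidiag2_dim [simp]: "dim_row (antidiag2 x y) = 2" "dim_col (antidiag2 x y) = 2"
  unfolding antidiag2_def mat_of_rows_list_def by simp_all

lemma antidiag2_carrier: "antidiag2 x y \<in> carrier_mat 2 2"
  by (simp add: carrier_matI)

lemma antidiag2_index:
  "antidiag2 x y $$ (0, 0) = 0" "antidiag2 x y $$ (0, 1) = of_real x"
  "antidiag2 x y $$ (1, 0) = of_real y" "antidiag2 x y $$ (1, 1) = 0"
  by (simp_all add: antidiag2_def mat_of_rows_list_def)

definition block2 :: "complex mat \<Rightarrow> nat \<Rightarrow> nat \<Rightarrow> complex mat" where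
  "block2 A a b = mat 2 2 (\<lambda>(k, l). A $$ (2 * a + k, 2 * b + l))"

lemma block2_dim [simp]: "dim_row (block2 A a b) = 2" "dim_col (block2 A a b) = 2"
  by (simp_all add: block2_def)

lemma block2_carrier [simp]: "block2 A a b \<in> carrier_mat 2 2"
  by (simp add: carrier_matI)

lemma block2_index [simp]: "k < 2 \<Longrightarrow> l < 2 \<Longrightarrow> block2 A a b $$ (k, l) = A $$ (2 * a + k, 2 * b + l)"
  by (simp add: block2_def)

lemma rho_f_carrier: "rho_f \<rho> U \<in> carrier_mat 4 4"
  by (simp add: rho_f_def carrier_matI)

lemma conj_2x2_index:
  assumes "U \<in> carrier_mat 2 2" "B \<in> carrier_mat 2 2" "i < 2" "j < 2"
  shows "(U * B * cadj U) $$ (i, j) = (\<Sum>k<2. \<Sum>l<2. U $$ (i, k) * B $$ (k, l) * cnj (U $$ (j, l)))"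
proof -
  have "dim_row U = 2" "dim_col U = 2" "dim_row B = 2" "dim_col B = 2" using assms by auto
  then show ?thesis using assms(3,4)
    by (simp add: scalar_prod_def atLeast0LessThan sum_lessThan_2 algebra_simps)
qed

lemma block2_rho_f:
  assumes \<rho>: "\<rho> \<in> carrier_mat 4 4" and U: "U \<in> carrier_mat 2 2" and "a < 2" "b < 2"
  shows "block2 (rho_f \<rho> U) a b = U * block2 \<rho> a b * cadj U"
proof (rule eq_matI)
  fix k l assume "k < dim_row (U * block2 \<rho> a b * cadj U)" "l < dim_col (U * block2 \<rho> a b * cadj U)"
  then have "k < 2" "l < 2" using U by auto
  have "rho_f \<rho> U $$ (2 * a + k, 2 * b + l)
    = (\<Sum>n<4. \<Sum>m<4. kron2 (1\<^sub>m 2) U $$ (2 * a + k, m) * \<rho> $$ (m, n) * kron2 (1\<^sub>m 2) (cadj U) $$ (n, 2 * b + l))"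
    using \<rho> \<open>a < 2\<close> \<open>b < 2\<close> \<open>k < 2\<close> \<open>l < 2\<close>
    by (auto simp: rho_f_def scalar_prod_def atLeast0LessThan sum_distrib_right)
  also have "\<dots> = (\<Sum>m<2. \<Sum>n<2. U $$ (k, m) * \<rho> $$ (2 * a + m, 2 * b + n) * cnj (U $$ (l, n)))"
    using U \<open>a < 2\<close> \<open>b < 2\<close> \<open>k < 2\<close> \<open>l < 2\<close>
    by (auto simp: less_2_cases_iff sum_lessThan_4 sum_lessThan_2 kron2_index)
  finally show "block2 (rho_f \<rho> U) a b $$ (k, l) = (U * block2 \<rho> a b * cadj U) $$ (k, l)"
    using conj_2x2_index[OF U block2_carrier \<open>k < 2\<close> \<open>l < 2\<close>] \<open>k < 2\<close> \<open>l < 2\<close> by simp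
qed (use U in auto)

lemma frob_norm_sq: "frob_norm A ^ 2 = (\<Sum>i<dim_row A. \<Sum>j<dim_col A. (cmod (A $$ (i, j)))\<^sup>2)"
  by (simp add: frob_norm_def sum_nonneg)

lemma frob_norm_sq_block2:
  assumes "A \<in> carrier_mat 4 4"
  shows "frob_norm A ^ 2 = (\<Sum>a<2. \<Sum>b<2. frob_norm (block2 A a b) ^ 2)"
proof -
  have "dim_row A = 4" "dim_col A = 4" using assms by auto
  then show ?thesis
    unfolding frob_norm_sq
    by (simp add: sum_lessThan_2 sum_lessThan_4 numeral_3_eq_3 numeral_2_eq_2 algebra_simps)
qed

lemma block2_minus:
  assumes "A \<in> carrier_mat 4 4" "B \<in> carrier_mat 4 4" "a < 2" "b < 2"
  shows "block2 (A - B) a b = block2 A a b - block2 B a b"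
  by (rule eq_matI) (use assms in auto)

lemma block2_sub_rho_f:
  assumes "\<rho> \<in> carrier_mat 4 4" "U \<in> carrier_mat 2 2" "a < 2" "b < 2"
  shows "block2 (\<rho> - rho_f \<rho> U) a b = block2 \<rho> a b - U * block2 \<rho> a b * cadj U"
  using assms by (simp add: block2_minus rho_f_carrier block2_rho_f)

section \<open>Conjugation by a unitary two-by-two matrix\<close>

lemma unitary2_entries:
  assumes "unitary2 U"
  shows "U $$ (0, 0) * cnj (U $$ (0, 0)) + U $$ (0, 1) * cnj (U $$ (0, 1)) = 1"
    "U $$ (0, 0) * cnj (U $$ (1, 0)) + U $$ (0, 1) * cnj (U $$ (1, 1)) = 0"
    "U $$ (1, 0) * cnj (U $$ (0, 0)) + U $$ (1, 1) * cnj (U $$ (0, 1)) = 0"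
    "U $$ (1, 0) * cnj (U $$ (1, 0)) + U $$ (1, 1) * cnj (U $$ (1, 1)) = 1"
proof -
  have U: "U \<in> carrier_mat 2 2" and inv: "U * cadj U = 1\<^sub>m 2"
    using assms by (auto simp: unitary2_def)
  have e: "1\<^sub>m 2 $$ (i, j) = (\<Sum>k<2. U $$ (i, k) * cnj (U $$ (j, k)))" if "i < 2" "j < 2" for i j
    using U that by (auto simp: scalar_prod_def atLeast0LessThan simp flip: inv)
  show "U $$ (0, 0) * cnj (U $$ (0, 0)) + U $$ (0, 1) * cnj (U $$ (0, 1)) = 1"
    "U $$ (0, 0) * cnj (U $$ (1, 0)) + U $$ (0, 1) * cnj (U $$ (1, 1)) = 0"
    "U $$ (1, 0) * cnj (U $$ (0, 0)) + U $$ (1, 1) * cnj (U $$ (0, 1)) = 0"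
    "U $$ (1, 0) * cnj (U $$ (1, 0)) + U $$ (1, 1) * cnj (U $$ (1, 1)) = 1"
    using e[of 0 0] e[of 0 1] e[of 1 0] e[of 1 1] by (simp_all add: sum_lessThan_2)
qed

lemma orthonormal_rows2_col_norms:
  fixes a b c d :: complex
  assumes "a * cnj a + b * cnj b = 1" "a * cnj c + b * cnj d = 0"
    "c * cnj a + d * cnj b = 0" "c * cnj c + d * cnj d = 1"
  shows "c * cnj c = b * cnj b" "d * cnj d = a * cnj a"
  using assms by Groebner_Basis.algebra+

lemma unitary2_weights:
  assumes "unitary2 U"
  defines "A \<equiv> Re (U $$ (0, 0) * cnj (U $$ (1, 1)))" and "B \<equiv> Re (U $$ (0, 1) * cnj (U $$ (1, 0)))"
    and "q \<equiv> (cmod (U $$ (0, 1)))\<^sup>2"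
  shows "0 \<le> 1 - A - B" "1 - A - B \<le> 2" "0 \<le> 1 - A + B" "1 - A + B \<le> 2" "q \<le> 1"
    "(1 - A - B) + (1 - A + B) + 2 * q \<le> 4"
proof -
  obtain a b c d where abcd: "U $$ (0, 0) = a" "U $$ (0, 1) = b" "U $$ (1, 0) = c" "U $$ (1, 1) = d"
    by blast
  note u = unitary2_entries[OF assms(1), unfolded abcd]
  note v = orthonormal_rows2_col_norms[OF u]
  have "complex_of_real ((cmod a)\<^sup>2 + (cmod b)\<^sup>2) = 1" using u(1) by (simp only: of_real_add complex_norm_square)
  then have ab: "(cmod a)\<^sup>2 + (cmod b)\<^sup>2 = 1" by (metis of_real_eq_1_iff)
  have "complex_of_real ((cmod c)\<^sup>2) = complex_of_real ((cmod b)\<^sup>2)"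
    "complex_of_real ((cmod d)\<^sup>2) = complex_of_real ((cmod a)\<^sup>2)"
    using v by (simp_all only: complex_norm_square)
  then have "(cmod c)\<^sup>2 = (cmod b)\<^sup>2" "(cmod d)\<^sup>2 = (cmod a)\<^sup>2" by (simp_all only: of_real_eq_iff)
  then have "cmod c = cmod b" "cmod d = cmod a" by (simp_all add: power2_eq_iff_nonneg)
  then have "\<bar>A\<bar> \<le> (cmod a)\<^sup>2" "\<bar>B\<bar> \<le> (cmod b)\<^sup>2"
    unfolding A_def B_def abcd
    using abs_Re_le_cmod[of "a * cnj d"] abs_Re_le_cmod[of "b * cnj c"]
    by (simp_all add: norm_mult power2_eq_square)
  then show "0 \<le> 1 - A - B" "1 - A - B \<le> 2" "0 \<le> 1 - A + B" "1 - A + B \<le> 2" "q \<le> 1"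
    "(1 - A - B) + (1 - A + B) + 2 * q \<le> 4"
    using ab unfolding q_def abcd by (auto simp: abs_le_iff)
qed

lemma unitary2_one: "unitary2 (1\<^sub>m 2)"
proof -
  have "cadj (1\<^sub>m 2) = (1\<^sub>m 2 :: complex mat)" by (rule eq_matI) (auto simp: cadj_def)
  then show ?thesis unfolding unitary2_def by simp
qed

lemma smult_one_commute:
  fixes U :: "'a :: comm_semiring_1 mat"
  assumes "U \<in> carrier_mat n n"
  shows "(\<beta> \<cdot>\<^sub>m 1\<^sub>m n) * U = U * (\<beta> \<cdot>\<^sub>m 1\<^sub>m n)"
  using assms by (simp add: mult_smult_assoc_mat[of "1\<^sub>m n" n n U n] mult_smult_distrib[of U n n "1\<^sub>m n" n])

lemma smult_add_smult_one_commute: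
  fixes P U :: "'a :: comm_semiring_1 mat"
  assumes P: "P \<in> carrier_mat n n" and U: "U \<in> carrier_mat n n" and comm: "P * U = U * P"
  shows "(\<alpha> \<cdot>\<^sub>m P + \<beta> \<cdot>\<^sub>m 1\<^sub>m n) * U = U * (\<alpha> \<cdot>\<^sub>m P + \<beta> \<cdot>\<^sub>m 1\<^sub>m n)"
  using assms smult_one_commute[OF U]
  by (simp add: add_mult_distrib_mat[of _ n n] mult_add_distrib_mat[of U n n _ n] mult_smult_distrib[of U n n P n]
      mult_smult_assoc_mat[of P n n U n])

lemma sub_conj_add_commuting:
  assumes U: "unitary2 U" and C: "C \<in> carrier_mat 2 2" and D: "D \<in> carrier_mat 2 2"
    and comm: "C * U = U * C"
  shows "(C + D) - U * (C + D) * cadj U = D - U * D * cadj U"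
proof -
  have U2: "U \<in> carrier_mat 2 2" and inv: "U * cadj U = 1\<^sub>m 2" using U by (auto simp: unitary2_def)
  have "U * C * cadj U = C * (U * cadj U)"
    using U2 C by (simp flip: comm add: assoc_mult_mat[of _ 2 2 _ 2 _ 2])
  also have "\<dots> = C" using C by (simp add: inv)
  finally have fix_C: "U * C * cadj U = C" .
  have "U * (C + D) * cadj U = C + U * D * cadj U"
    using U2 C D by (simp add: mult_add_distrib_mat add_mult_distrib_mat[of "U * C" 2 2 "U * D" "cadj U" 2] fix_C)
  then show ?thesis by (rule ssubst) (rule eq_matI, use C D U2 in auto)
qed

lemma frob_norm_sq_block2_sub_rho_f:
  assumes \<rho>: "\<rho> \<in> carrier_mat 4 4" and un: "unitary2 U" and "a < 2" "b < 2"
    and "block2 \<rho> a b = C + W" "C \<in> carrier_mat 2 2" "W \<in> carrier_mat 2 2" and "C * U = U * C"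
  shows "frob_norm (block2 (\<rho> - rho_f \<rho> U) a b) ^ 2 = frob_norm (W - U * W * cadj U) ^ 2"
  using assms block2_sub_rho_f[OF \<rho>, of U a b] sub_conj_add_commuting[OF un, of C W]
  by (simp add: unitary2_def)

lemma frob_norm_sq_sub_conj_2x2:
  assumes U: "U \<in> carrier_mat 2 2" and B: "B \<in> carrier_mat 2 2"
  shows "complex_of_real (frob_norm (B - U * B * cadj U) ^ 2)
    = (\<Sum>i<2. \<Sum>j<2. (B $$ (i, j) - (\<Sum>k<2. \<Sum>l<2. U $$ (i, k) * B $$ (k, l) * cnj (U $$ (j, l))))
        * cnj (B $$ (i, j) - (\<Sum>k<2. \<Sum>l<2. U $$ (i, k) * B $$ (k, l) * cnj (U $$ (j, l)))))"
proof -
  have "dim_row (B - U * B * cadj U) = 2" "dim_col (B - U * B * cadj U) = 2" using U B by auto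
  moreover have "(B - U * B * cadj U) $$ (i, j)
      = B $$ (i, j) - (\<Sum>k<2. \<Sum>l<2. U $$ (i, k) * B $$ (k, l) * cnj (U $$ (j, l)))"
    if "i < 2" "j < 2" for i j
    using conj_2x2_index[OF U B that] U B that by simp
  ultimately show ?thesis
    by (simp add: frob_norm_sq complex_norm_square del: of_real_power)
qed

lemma frob_norm_sq_sub_conj_pauli_z:
  assumes "unitary2 U"
  shows "frob_norm (of_real t \<cdot>\<^sub>m pauli 2 - U * (of_real t \<cdot>\<^sub>m pauli 2) * cadj U) ^ 2
    = 8 * t\<^sup>2 * (cmod (U $$ (0, 1)))\<^sup>2"
proof -
  have U: "U \<in> carrier_mat 2 2" using assms by (simp add: unitary2_def)
  have Z: "of_real t \<cdot>\<^sub>m pauli 2 \<in> carrier_mat 2 2" by (simp add: pauli_carrier)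
  obtain a b c d where abcd: "U $$ (0, 0) = a" "U $$ (0, 1) = b" "U $$ (1, 0) = c" "U $$ (1, 1) = d"
    by blast
  note u = unitary2_entries[OF assms, unfolded abcd]
  note v = orthonormal_rows2_col_norms[OF u]
  have "complex_of_real (frob_norm (of_real t \<cdot>\<^sub>m pauli 2 - U * (of_real t \<cdot>\<^sub>m pauli 2) * cadj U) ^ 2)
    = complex_of_real (8 * t\<^sup>2 * (cmod (U $$ (0, 1)))\<^sup>2)"
    unfolding frob_norm_sq_sub_conj_2x2[OF U Z] using pauli_carrier[of 2] u v
    by (simp add: sum_lessThan_2 pauli_z_index complex_norm_square abcd flip: One_nat_def del: of_real_power)
      (unfold of_real_power, Groebner_Basis.algebra)
  then show ?thesis by (simp only: of_real_eq_iff)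
qed

lemma of_real_Re: "complex_of_real (Re z) = (z + cnj z) / 2"
  by (simp add: complex_add_cnj)

lemma frob_norm_sq_sub_conj_antidiag2:
  assumes "unitary2 U"
  shows "frob_norm (antidiag2 x y - U * antidiag2 x y * cadj U) ^ 2
    = 2 * (x\<^sup>2 + y\<^sup>2) * (1 - Re (U $$ (0, 0) * cnj (U $$ (1, 1))))
      - 4 * x * y * Re (U $$ (0, 1) * cnj (U $$ (1, 0)))"
proof -
  have U: "U \<in> carrier_mat 2 2" using assms by (simp add: unitary2_def)
  obtain a b c d where abcd: "U $$ (0, 0) = a" "U $$ (0, 1) = b" "U $$ (1, 0) = c" "U $$ (1, 1) = d"
    by blast
  note u = unitary2_entries[OF assms, unfolded abcd]
  note v = orthonormal_rows2_col_norms[OF u]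
  obtain p q where pq: "Re (a * cnj d) = p" "Re (b * cnj c) = q" by blast
  have "complex_of_real p = (a * cnj d + cnj a * d) / 2" "complex_of_real q = (b * cnj c + cnj b * c) / 2"
    unfolding pq [symmetric] of_real_Re by (simp_all add: mult.commute)
  then have "complex_of_real (frob_norm (antidiag2 x y - U * antidiag2 x y * cadj U) ^ 2)
    = complex_of_real (2 * (x\<^sup>2 + y\<^sup>2) * (1 - p) - 4 * x * y * q)"
    unfolding frob_norm_sq_sub_conj_2x2[OF U antidiag2_carrier] using u v
    by (simp add: sum_lessThan_2 antidiag2_index complex_norm_square abcd
          flip: One_nat_def del: of_real_power)
      (unfold of_real_power, Groebner_Basis.algebra)
  then show ?thesis unfolding abcd pq by (simp only: of_real_eq_iff)
qed

section \<open>States with diagonal correlation matrix\<close>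

lemma state_carrier: "two_qubit_state \<rho> \<Longrightarrow> \<rho> \<in> carrier_mat 4 4"
  by (simp add: two_qubit_state_def)

lemma state_hermitian_index:
  assumes "two_qubit_state \<rho>" "i < 4" "j < 4"
  shows "\<rho> $$ (j, i) = cnj (\<rho> $$ (i, j))"
proof -
  have "\<rho> \<in> carrier_mat 4 4" "cadj \<rho> = \<rho>" using assms(1) by (auto simp: two_qubit_state_def)
  then show ?thesis using assms(2,3) cadj_index[of j \<rho> i] by auto
qed

lemma state_index_below_diagonal:
  assumes "two_qubit_state \<rho>"
  shows "\<rho> $$ (1, 0) = cnj (\<rho> $$ (0, 1))" "\<rho> $$ (2, 0) = cnj (\<rho> $$ (0, 2))"
    "\<rho> $$ (3, 0) = cnj (\<rho> $$ (0, 3))" "\<rho> $$ (2, 1) = cnj (\<rho> $$ (1, 2))"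
    "\<rho> $$ (3, 1) = cnj (\<rho> $$ (1, 3))" "\<rho> $$ (3, 2) = cnj (\<rho> $$ (2, 3))"
  using state_hermitian_index[OF assms, of 0 1] state_hermitian_index[OF assms, of 0 2]
    state_hermitian_index[OF assms, of 0 3] state_hermitian_index[OF assms, of 1 2]
    state_hermitian_index[OF assms, of 1 3] state_hermitian_index[OF assms, of 2 3] by simp_all

lemma state_diagonal_real:
  assumes "two_qubit_state \<rho>" "k < 4"
  shows "\<rho> $$ (k, k) = of_real (Re (\<rho> $$ (k, k)))"
  using state_hermitian_index[OF assms assms(2)] by (auto simp: complex_eq_iff)

lemma corr_mat_index:
  assumes "\<rho> \<in> carrier_mat 4 4" "i < 3" "j < 3"
  shows "corr_mat \<rho> $$ (i, j)
    = Re (\<Sum>k<4. \<Sum>l<4. pauli i $$ (k div 2, l div 2) * pauli j $$ (k mod 2, l mod 2) * \<rho> $$ (l, k))"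
  using assms by (simp add: corr_mat_def mtrace_def scalar_prod_def atLeast0LessThan kron2_index)

lemma corr_mat_state:
  assumes st: "two_qubit_state \<rho>"
  shows "corr_mat \<rho> $$ (0, 0) = 2 * Re (\<rho> $$ (0, 3)) + 2 * Re (\<rho> $$ (1, 2))"
    "corr_mat \<rho> $$ (0, 1) = 2 * Im (\<rho> $$ (1, 2)) - 2 * Im (\<rho> $$ (0, 3))"
    "corr_mat \<rho> $$ (0, 2) = 2 * Re (\<rho> $$ (0, 2)) - 2 * Re (\<rho> $$ (1, 3))"
    "corr_mat \<rho> $$ (1, 0) = - 2 * Im (\<rho> $$ (0, 3)) - 2 * Im (\<rho> $$ (1, 2))"
    "corr_mat \<rho> $$ (1, 1) = 2 * Re (\<rho> $$ (1, 2)) - 2 * Re (\<rho> $$ (0, 3))"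
    "corr_mat \<rho> $$ (1, 2) = 2 * Im (\<rho> $$ (1, 3)) - 2 * Im (\<rho> $$ (0, 2))"
    "corr_mat \<rho> $$ (2, 0) = 2 * Re (\<rho> $$ (0, 1)) - 2 * Re (\<rho> $$ (2, 3))"
    "corr_mat \<rho> $$ (2, 1) = 2 * Im (\<rho> $$ (2, 3)) - 2 * Im (\<rho> $$ (0, 1))"
    "corr_mat \<rho> $$ (2, 2) = Re (\<rho> $$ (0, 0)) - Re (\<rho> $$ (1, 1)) - Re (\<rho> $$ (2, 2)) + Re (\<rho> $$ (3, 3))"
proof -
  note h = state_index_below_diagonal[OF st]
  note ce = corr_mat_index[OF state_carrier[OF st]]
  show "corr_mat \<rho> $$ (0, 0) = 2 * Re (\<rho> $$ (0, 3)) + 2 * Re (\<rho> $$ (1, 2))"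
    "corr_mat \<rho> $$ (0, 1) = 2 * Im (\<rho> $$ (1, 2)) - 2 * Im (\<rho> $$ (0, 3))"
    "corr_mat \<rho> $$ (0, 2) = 2 * Re (\<rho> $$ (0, 2)) - 2 * Re (\<rho> $$ (1, 3))"
    "corr_mat \<rho> $$ (1, 0) = - 2 * Im (\<rho> $$ (0, 3)) - 2 * Im (\<rho> $$ (1, 2))"
    "corr_mat \<rho> $$ (1, 1) = 2 * Re (\<rho> $$ (1, 2)) - 2 * Re (\<rho> $$ (0, 3))"
    "corr_mat \<rho> $$ (1, 2) = 2 * Im (\<rho> $$ (1, 3)) - 2 * Im (\<rho> $$ (0, 2))"
    "corr_mat \<rho> $$ (2, 0) = 2 * Re (\<rho> $$ (0, 1)) - 2 * Re (\<rho> $$ (2, 3))"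
    "corr_mat \<rho> $$ (2, 1) = 2 * Im (\<rho> $$ (2, 3)) - 2 * Im (\<rho> $$ (0, 1))"
    "corr_mat \<rho> $$ (2, 2) = Re (\<rho> $$ (0, 0)) - Re (\<rho> $$ (1, 1)) - Re (\<rho> $$ (2, 2)) + Re (\<rho> $$ (3, 3))"
    by (simp_all add: ce sum_lessThan_4 pauli_def mat_of_rows_list_def h[unfolded One_nat_def] One_nat_def)
qed

lemma diagonal_corr_state_index:
  assumes st: "two_qubit_state \<rho>" and dg: "is_diagonal (corr_mat \<rho>)"
  shows "\<rho> $$ (0, 3) = of_real (Re (\<rho> $$ (0, 3)))" "\<rho> $$ (1, 2) = of_real (Re (\<rho> $$ (1, 2)))"
    "\<rho> $$ (1, 3) = \<rho> $$ (0, 2)" "\<rho> $$ (2, 3) = \<rho> $$ (0, 1)"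
proof -
  have "corr_mat \<rho> $$ (i, j) = 0" if "i < 3" "j < 3" "i \<noteq> j" for i j
    using dg that by (simp add: is_diagonal_def corr_mat_def)
  then have "corr_mat \<rho> $$ (0, 1) = 0" "corr_mat \<rho> $$ (1, 0) = 0" "corr_mat \<rho> $$ (0, 2) = 0"
    "corr_mat \<rho> $$ (1, 2) = 0" "corr_mat \<rho> $$ (2, 0) = 0" "corr_mat \<rho> $$ (2, 1) = 0"
    by simp_all
  then show "\<rho> $$ (0, 3) = of_real (Re (\<rho> $$ (0, 3)))" "\<rho> $$ (1, 2) = of_real (Re (\<rho> $$ (1, 2)))"
    "\<rho> $$ (1, 3) = \<rho> $$ (0, 2)" "\<rho> $$ (2, 3) = \<rho> $$ (0, 1)"
    unfolding corr_mat_state[OF st] by (simp_all add: complex_eq_iff)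
qed

text \<open>The last summands are the blocks of \<open>\<Sum>\<^sub>i T\<^sub>i\<^sub>i \<sigma>\<^sub>i \<otimes> \<sigma>\<^sub>i / 4\<close>, where
  \<open>T\<^sub>0\<^sub>0 = 2 (x + y)\<close>, \<open>T\<^sub>1\<^sub>1 = 2 (y - x)\<close> and \<open>T\<^sub>2\<^sub>2 = t\<close>.\<close>

lemma block2_diagonal_corr_state:
  assumes st: "two_qubit_state \<rho>" and dg: "is_diagonal (corr_mat \<rho>)"
  defines "s \<equiv> (\<rho> $$ (0, 0) + \<rho> $$ (1, 1) - \<rho> $$ (2, 2) - \<rho> $$ (3, 3)) / 4"
    and "t \<equiv> corr_mat \<rho> $$ (2, 2)" and "x \<equiv> Re (\<rho> $$ (0, 3))" and "y \<equiv> Re (\<rho> $$ (1, 2))"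
  shows "block2 \<rho> 0 0 = (1 / 2 \<cdot>\<^sub>m ptrace_A \<rho> + s \<cdot>\<^sub>m 1\<^sub>m 2) + of_real (t / 4) \<cdot>\<^sub>m pauli 2"
    "block2 \<rho> 1 1 = (1 / 2 \<cdot>\<^sub>m ptrace_A \<rho> + (- s) \<cdot>\<^sub>m 1\<^sub>m 2) + of_real (- t / 4) \<cdot>\<^sub>m pauli 2"
    "block2 \<rho> 0 1 = \<rho> $$ (0, 2) \<cdot>\<^sub>m 1\<^sub>m 2 + antidiag2 x y"
    "block2 \<rho> 1 0 = cnj (\<rho> $$ (0, 2)) \<cdot>\<^sub>m 1\<^sub>m 2 + antidiag2 y x"
proof -
  note e = diagonal_corr_state_index[OF st dg]
  note h = state_index_below_diagonal[OF st]
  obtain p0 p1 p2 p3 where p: "\<rho> $$ (0, 0) = of_real p0" "\<rho> $$ (1, 1) = of_real p1"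
    "\<rho> $$ (2, 2) = of_real p2" "\<rho> $$ (3, 3) = of_real p3"
    using state_diagonal_real[OF st, of 0] state_diagonal_real[OF st, of 1]
      state_diagonal_real[OF st, of 2] state_diagonal_real[OF st, of 3] by simp
  have t: "t = p0 - p1 - p2 + p3" unfolding t_def corr_mat_state(9)[OF st] p by simp
  have xy: "\<rho> $$ (0, 3) = of_real x" "\<rho> $$ (1, 2) = of_real y"
    unfolding x_def y_def by (fact e(1), fact e(2))
  show "block2 \<rho> 0 0 = (1 / 2 \<cdot>\<^sub>m ptrace_A \<rho> + s \<cdot>\<^sub>m 1\<^sub>m 2) + of_real (t / 4) \<cdot>\<^sub>m pauli 2"
    "block2 \<rho> 1 1 = (1 / 2 \<cdot>\<^sub>m ptrace_A \<rho> + (- s) \<cdot>\<^sub>m 1\<^sub>m 2) + of_real (- t / 4) \<cdot>\<^sub>m pauli 2"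
    "block2 \<rho> 0 1 = \<rho> $$ (0, 2) \<cdot>\<^sub>m 1\<^sub>m 2 + antidiag2 x y"
    "block2 \<rho> 1 0 = cnj (\<rho> $$ (0, 2)) \<cdot>\<^sub>m 1\<^sub>m 2 + antidiag2 y x"
    by (rule eq_matI; auto simp: less_2_cases ptrace_A_index pauli_z_index antidiag2_index
        ptrace_A_carrier pauli_carrier antidiag2_carrier s_def t xy e(3,4) h p field_simps simp flip: One_nat_def)+
qed

lemma frob_norm_sq_sub_rho_f:
  assumes st: "two_qubit_state \<rho>" and dg: "is_diagonal (corr_mat \<rho>)"
    and un: "unitary2 U" and cyc: "ptrace_A \<rho> * U = U * ptrace_A \<rho>"
  shows "frob_norm (\<rho> - rho_f \<rho> U) ^ 2
    = ((corr_mat \<rho> $$ (0, 0))\<^sup>2 * (1 - Re (U $$ (0, 0) * cnj (U $$ (1, 1))) - Re (U $$ (0, 1) * cnj (U $$ (1, 0))))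
      + (corr_mat \<rho> $$ (1, 1))\<^sup>2 * (1 - Re (U $$ (0, 0) * cnj (U $$ (1, 1))) + Re (U $$ (0, 1) * cnj (U $$ (1, 0))))
      + (corr_mat \<rho> $$ (2, 2))\<^sup>2 * (2 * (cmod (U $$ (0, 1)))\<^sup>2)) / 2"
proof -
  have \<rho>: "\<rho> \<in> carrier_mat 4 4" using st by (rule state_carrier)
  have U: "U \<in> carrier_mat 2 2" using un by (simp add: unitary2_def)
  define t x y where "t = corr_mat \<rho> $$ (2, 2)" and "x = Re (\<rho> $$ (0, 3))" and "y = Re (\<rho> $$ (1, 2))"
  note blocks = block2_diagonal_corr_state[OF st dg, folded t_def x_def y_def]
  note reduce = frob_norm_sq_block2_sub_rho_f[OF \<rho> un]
  have comm_P: "(\<alpha> \<cdot>\<^sub>m ptrace_A \<rho> + \<beta> \<cdot>\<^sub>m 1\<^sub>m 2) * U = U * (\<alpha> \<cdot>\<^sub>m ptrace_A \<rho> + \<beta> \<cdot>\<^sub>m 1\<^sub>m 2)" for \<alpha> \<beta>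
    by (rule smult_add_smult_one_commute[OF ptrace_A_carrier U cyc])
  note Z = frob_norm_sq_sub_conj_pauli_z[OF un] and A = frob_norm_sq_sub_conj_antidiag2[OF un]
  obtain p q where pq: "Re (U $$ (0, 0) * cnj (U $$ (1, 1))) = p" "Re (U $$ (0, 1) * cnj (U $$ (1, 0))) = q"
    by blast
  have "frob_norm (block2 (\<rho> - rho_f \<rho> U) 0 0) ^ 2 = 8 * (t / 4)\<^sup>2 * (cmod (U $$ (0, 1)))\<^sup>2"
    "frob_norm (block2 (\<rho> - rho_f \<rho> U) 1 1) ^ 2 = 8 * (- t / 4)\<^sup>2 * (cmod (U $$ (0, 1)))\<^sup>2"
    by (rule trans[OF reduce[OF _ _ blocks(1) _ _ comm_P] Z] trans[OF reduce[OF _ _ blocks(2) _ _ comm_P] Z];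
        simp add: ptrace_A_carrier pauli_carrier)+
  moreover have "frob_norm (block2 (\<rho> - rho_f \<rho> U) 0 1) ^ 2 = 2 * (x\<^sup>2 + y\<^sup>2) * (1 - p) - 4 * x * y * q"
    "frob_norm (block2 (\<rho> - rho_f \<rho> U) 1 0) ^ 2 = 2 * (y\<^sup>2 + x\<^sup>2) * (1 - p) - 4 * y * x * q"
    unfolding pq [symmetric]
    by (rule trans[OF reduce[OF _ _ blocks(3) _ _ smult_one_commute[OF U]] A]
        trans[OF reduce[OF _ _ blocks(4) _ _ smult_one_commute[OF U]] A]; simp add: antidiag2_carrier)+
  moreover have "frob_norm (\<rho> - rho_f \<rho> U) ^ 2 = (\<Sum>a<2. \<Sum>b<2. frob_norm (block2 (\<rho> - rho_f \<rho> U) a b) ^ 2)"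
    by (intro frob_norm_sq_block2 minus_carrier_mat rho_f_carrier)
  ultimately have "frob_norm (\<rho> - rho_f \<rho> U) ^ 2
    = t\<^sup>2 * (cmod (U $$ (0, 1)))\<^sup>2 + 4 * (x\<^sup>2 + y\<^sup>2) * (1 - p) - 8 * x * y * q"
    unfolding sum_lessThan_2 by (simp add: power2_eq_square algebra_simps)
  also have "\<dots> = ((corr_mat \<rho> $$ (0, 0))\<^sup>2 * (1 - Re (U $$ (0, 0) * cnj (U $$ (1, 1))) - Re (U $$ (0, 1) * cnj (U $$ (1, 0))))
      + (corr_mat \<rho> $$ (1, 1))\<^sup>2 * (1 - Re (U $$ (0, 0) * cnj (U $$ (1, 1))) + Re (U $$ (0, 1) * cnj (U $$ (1, 0))))
      + (corr_mat \<rho> $$ (2, 2))\<^sup>2 * (2 * (cmod (U $$ (0, 1)))\<^sup>2)) / 2"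
    unfolding corr_mat_state(1,5)[OF st] t_def [symmetric] x_def [symmetric] y_def [symmetric] pq
    by (simp add: power2_eq_square algebra_simps)
  finally show ?thesis .
qed

lemma frob_norm_sq_sub_rho_f_le_M_val:
  assumes st: "two_qubit_state \<rho>" and dg: "is_diagonal (corr_mat \<rho>)"
    and un: "unitary2 U" and cyc: "ptrace_A \<rho> * U = U * ptrace_A \<rho>"
  shows "frob_norm (\<rho> - rho_f \<rho> U) ^ 2 \<le> M_val \<rho>"
proof -
  define A B q where "A = Re (U $$ (0, 0) * cnj (U $$ (1, 1)))" and "B = Re (U $$ (0, 1) * cnj (U $$ (1, 0)))"
    and "q = (cmod (U $$ (0, 1)))\<^sup>2"
  define \<tau>0 \<tau>1 \<tau>2 where "\<tau>0 = (corr_mat \<rho> $$ (0, 0))\<^sup>2" and "\<tau>1 = (corr_mat \<rho> $$ (1, 1))\<^sup>2"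
    and "\<tau>2 = (corr_mat \<rho> $$ (2, 2))\<^sup>2"
  note w = unitary2_weights[OF un, folded A_def B_def q_def]
  have "frob_norm (\<rho> - rho_f \<rho> U) ^ 2 = (\<tau>0 * (1 - A - B) + \<tau>1 * (1 - A + B) + \<tau>2 * (2 * q)) / 2"
    unfolding frob_norm_sq_sub_rho_f[OF assms] A_def B_def q_def \<tau>0_def \<tau>1_def \<tau>2_def ..
  also have "\<dots> \<le> \<tau>0 + \<tau>1 + \<tau>2 - min \<tau>0 (min \<tau>1 \<tau>2)"
  proof -
    have "0 \<le> \<tau>0" "0 \<le> \<tau>1" "0 \<le> \<tau>2" "0 \<le> 2 * q" "2 * q \<le> 2"
      using w(5) unfolding \<tau>0_def \<tau>1_def \<tau>2_def q_def by simp_all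
    with weighted_sum_le_sum_minus_min[of \<tau>0 \<tau>1 \<tau>2 "1 - A - B" "1 - A + B" "2 * q"] w
    show ?thesis by simp
  qed
  also have "\<dots> = M_val \<rho>"
    unfolding M_val_diagonal[OF dg] \<tau>0_def \<tau>1_def \<tau>2_def ..
  finally show ?thesis .
qed

lemma d_max_le:
  assumes "\<And>U. unitary2 U \<Longrightarrow> ptrace_A \<rho> * U = U * ptrace_A \<rho> \<Longrightarrow> dist_cyc \<rho> U \<le> c"
  shows "d_max \<rho> \<le> c"
proof -
  have "ptrace_A \<rho> * 1\<^sub>m 2 = 1\<^sub>m 2 * ptrace_A \<rho>" using ptrace_A_carrier by simp
  then show ?thesis
    unfolding d_max_def using unitary2_one assms by (intro cSup_least) auto
qed

lemma diagonal_corr_state_d_max_le: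
  assumes "two_qubit_state \<rho>" and "is_diagonal (corr_mat \<rho>)"
  shows "d_max \<rho> \<le> sqrt (M_val \<rho>) / sqrt 2"
proof (rule d_max_le)
  fix U assume "unitary2 U" "ptrace_A \<rho> * U = U * ptrace_A \<rho>"
  then have "frob_norm (\<rho> - rho_f \<rho> U) \<le> sqrt (M_val \<rho>)"
    using frob_norm_sq_sub_rho_f_le_M_val[OF assms] by (intro real_le_rsqrt)
  then show "dist_cyc \<rho> U \<le> sqrt (M_val \<rho>) / sqrt 2"
    unfolding dist_cyc_def by (simp add: divide_right_mono)
qed

section \<open>A state with \<open>M > 1\<close> and \<open>d\<^sub>m\<^sub>a\<^sub>x \<le> 1 / sqrt 2\<close>\<close>

definition rho0 :: "complex mat" where
  "rho0 = mat 4 4 (\<lambda>(i, j). if i = 0 \<and> j = 0 then 3/4 else if i = 3 \<and> j = 3 then 1/4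
      else if (i = 0 \<and> j = 3) \<or> (i = 3 \<and> j = 0) then 1/4 else 0)"

lemma rho0_carrier: "rho0 \<in> carrier_mat 4 4"
  by (simp add: rho0_def)

lemma rho0_index: "i < 4 \<Longrightarrow> j < 4 \<Longrightarrow> rho0 $$ (i, j) = (if i = 0 \<and> j = 0 then 3/4 else if i = 3 \<and> j = 3 then 1/4
      else if (i = 0 \<and> j = 3) \<or> (i = 3 \<and> j = 0) then 1/4 else 0)"
  by (simp add: rho0_def)

lemma two_qubit_state_rho0: "two_qubit_state rho0"
proof -
  have "cadj rho0 = rho0"
    by (rule eq_matI) (use rho0_carrier in \<open>auto simp: rho0_index\<close>)
  moreover have "0 \<le> Re (conjugate v \<bullet> (rho0 *\<^sub>v v))" if "v \<in> carrier_vec 4" for v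
  proof -
    have "Re (conjugate v \<bullet> (rho0 *\<^sub>v v))
      = (1/2) * ((Re (v $ 0))\<^sup>2 + (Im (v $ 0))\<^sup>2) + (1/4) * ((Re (v $ 0) + Re (v $ 3))\<^sup>2 + (Im (v $ 0) + Im (v $ 3))\<^sup>2)"
      using that rho0_carrier
      by (simp add: scalar_prod_def atLeast0LessThan sum_lessThan_4 rho0_index algebra_simps power2_eq_square,
          simp add: field_simps)
    then show ?thesis by simp
  qed
  moreover have "mtrace rho0 = 1" using rho0_carrier by (simp add: mtrace_def sum_lessThan_4 rho0_index)
  ultimately show ?thesis unfolding two_qubit_state_def using rho0_carrier by auto
qed

lemma corr_mat_rho0:
  "corr_mat rho0 $$ (0, 0) = 1/2" "corr_mat rho0 $$ (1, 1) = -1/2" "corr_mat rho0 $$ (2, 2) = 1"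
  "corr_mat rho0 $$ (0, 1) = 0" "corr_mat rho0 $$ (0, 2) = 0" "corr_mat rho0 $$ (1, 0) = 0"
  "corr_mat rho0 $$ (1, 2) = 0" "corr_mat rho0 $$ (2, 0) = 0" "corr_mat rho0 $$ (2, 1) = 0"
  using corr_mat_state[OF two_qubit_state_rho0] by (simp_all add: rho0_index)

lemma is_diagonal_corr_mat_rho0: "is_diagonal (corr_mat rho0)"
proof -
  have "corr_mat rho0 $$ (i, j) = 0" if "i < 3" "j < 3" "i \<noteq> j" for i j
  proof -
    have "(i = 0 \<and> j = 1) \<or> (i = 0 \<and> j = 2) \<or> (i = 1 \<and> j = 0) \<or> (i = 1 \<and> j = 2) \<or> (i = 2 \<and> j = 0) \<or> (i = 2 \<and> j = 1)"
      using that by auto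
    then show ?thesis using corr_mat_rho0 by auto
  qed
  then show ?thesis unfolding is_diagonal_def by (simp add: corr_mat_def)
qed

lemma M_val_rho0: "M_val rho0 = 5/4"
  unfolding M_val_diagonal[OF is_diagonal_corr_mat_rho0] corr_mat_rho0 by (simp add: power2_eq_square)

lemma cyclic_rho0_diagonal:
  assumes "U \<in> carrier_mat 2 2" "ptrace_A rho0 * U = U * ptrace_A rho0"
  shows "U $$ (0, 1) = 0"
proof -
  have P: "ptrace_A rho0 $$ (0, 0) = 3/4" "ptrace_A rho0 $$ (0, 1) = 0" "ptrace_A rho0 $$ (1, 1) = 1/4"
    by (simp_all add: ptrace_A_index rho0_index)
  have "(ptrace_A rho0 * U) $$ (0, 1) = (U * ptrace_A rho0) $$ (0, 1)" using assms(2) by simp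
  then have "3/4 * U $$ (0, 1) = U $$ (0, 1) * (1/4)"
    using assms(1) by (simp add: scalar_prod_def atLeast0LessThan sum_lessThan_2 P P[unfolded One_nat_def])
  then show ?thesis by simp
qed

lemma dist_cyc_rho0_le:
  assumes un: "unitary2 U" and cyc: "ptrace_A rho0 * U = U * ptrace_A rho0"
  shows "dist_cyc rho0 U \<le> 1/2"
proof -
  have b: "U $$ (0, 1) = 0"
    using cyclic_rho0_diagonal[OF _ cyc] un by (simp add: unitary2_def)
  have "\<bar>Re (U $$ (0, 0) * cnj (U $$ (1, 1)))\<bar> \<le> 1"
    using unitary2_weights(1,2)[OF un] b by simp
  then have "frob_norm (rho0 - rho_f rho0 U) ^ 2 \<le> 1/2"
    unfolding frob_norm_sq_sub_rho_f[OF two_qubit_state_rho0 is_diagonal_corr_mat_rho0 un cyc]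
      corr_mat_rho0 b by (simp add: abs_le_iff power2_eq_square)
  then have "dist_cyc rho0 U ^ 2 \<le> (1/2)\<^sup>2"
    unfolding dist_cyc_def by (simp add: power_divide power2_eq_square)
  then show ?thesis by (rule power2_le_imp_le) simp
qed

theorem theorem3:
  shows "(\<forall>\<rho>. two_qubit_state \<rho> \<and> is_diagonal (corr_mat \<rho>) \<and> d_max \<rho> > 1 / sqrt 2
            \<longrightarrow> M_val \<rho> > 1)
       \<and> (\<exists>\<rho>. two_qubit_state \<rho> \<and> is_diagonal (corr_mat \<rho>) \<and> M_val \<rho> > 1
            \<and> d_max \<rho> \<le> 1 / sqrt 2)"
proof
  show "\<forall>\<rho>. two_qubit_state \<rho> \<and> is_diagonal (corr_mat \<rho>) \<and> d_max \<rho> > 1 / sqrt 2 \<longrightarrow> M_val \<rho> > 1"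
  proof (intro allI impI, elim conjE)
    fix \<rho> assume "two_qubit_state \<rho>" "is_diagonal (corr_mat \<rho>)" "d_max \<rho> > 1 / sqrt 2"
    then have "1 / sqrt 2 < sqrt (M_val \<rho>) / sqrt 2" using diagonal_corr_state_d_max_le by fastforce
    then show "M_val \<rho> > 1" by (simp add: divide_less_cancel)
  qed
  have "sqrt 2 \<le> 2" using real_sqrt_le_mono[of 2 4] by simp
  then have "1 / 2 \<le> 1 / sqrt 2" by (simp add: divide_simps)
  moreover have "d_max rho0 \<le> 1 / 2" by (rule d_max_le) (rule dist_cyc_rho0_le)
  ultimately have "d_max rho0 \<le> 1 / sqrt 2" by linarith
  then show "\<exists>\<rho>. two_qubit_state \<rho> \<and> is_diagonal (corr_mat \<rho>) \<and> M_val \<rho> > 1 \<and> d_max \<rho> \<le> 1 / sqrt 2"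
    using two_qubit_state_rho0 is_diagonal_corr_mat_rho0 M_val_rho0 by (intro exI[of _ rho0]) simp
qed

end
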